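(* Let $q\in\mathbb{C}^*$, $\lambda\in\mathbb{C}^*$ and $a,b\in\mathbb{C}$. Regard $\Omega_{\mathcal{R}}(\lambda,a,b)$ as an $\mathcal{L}$-module via the injective homomorphism $\tau:\mathcal{L}\to\mathcal{R}$. Then $\Omega_{\mathcal{R}}(\lambda,a,b)$ is a simple $\mathcal{L}$-module if and only if it is a simple $\mathcal{R}$-module.
   Context: Let $\mathbb{Z}_+=\{0,1,2,\dots\}$. For $s\in\{0,\frac12\}$ let $S(q)$ be the Lie superalgebra over $\mathbb{C}$ with even basis $\{L_{m,i}\mid m\in\mathbb{Z},i\in\mathbb{Z}_+\}$, odd basis $\{G_{l,j}\mid l\in s+\mathbb{Z},j\in\mathbb{Z}_+\}$ and brackets $[L_{m,i},L_{n,j}]=(n(i+q)-m(j+q))L_{m+n,i+j}$, $[L_{m,i},G_{l,j}]=(l(i+q)-m(j+\frac{q}{2}))G_{m+l,i+j}$, $[G_{l,i},G_{r,j}]=2qL_{l+r,i+j}$. For $s=0$ this is the Ramond-Block algebra $\mathcal{R}$, for $s=\frac12$ the Neveu-Schwarz-Block algebra $\mathcal{L}$ (same $q$). The map $\tau:\mathcal{L}\to\mathcal{R}$ is the linear map with $\tau(L_{m,i})=\frac12L_{2m,i}$, $\tau(G_{r,j})=\frac{1}{\sqrt2}G_{2r,j}$ ($m\in\mathbb{Z}$, $r\in\frac12+\mathbb{Z}$); it is an injective Lie superalgebra homomorphism. Modules are supermodules. For $\lambda\in\mathbb{C}^*$, $a,b\in\mathbb{C}$, $\Omega_{\mathcal{R}}(\lambda,a,b)=\mathbb{C}[t^2]\oplus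 t\mathbb{C}[t^2]$ (even part $\mathbb{C}[t^2]$, odd part $t\mathbb{C}[t^2]$) is the $\mathcal{R}$-module with, for $f\in\mathbb{C}[t^2]$, $m\in\mathbb{Z}$, $i\in\mathbb{Z}_+$: $L_{m,i}f(t^2)=\lambda^m(\delta_{i,0}(t^2-mqa)+\delta_{q,-1}\delta_{i,1}b)f(t^2-mq)$, $L_{m,i}tf(t^2)=\lambda^m t(\delta_{i,0}(t^2-mqa-\frac{mq}{2})+\delta_{q,-1}\delta_{i,1}b)f(t^2-mq)$, $G_{m,i}f(t^2)=\lambda^m\delta_{i,0}tf(t^2-mq)$, $G_{m,i}tf(t^2)=q\lambda^m(\delta_{i,0}(t^2-2mqa)+2\delta_{q,-1}\delta_{i,1}b)f(t^2-mq)$. *)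

theory Defs
  imports Complex_Main "HOL-Computational_Algebra.Polynomial"
begin

text \<open>The module Omega_R(lambda,a,b) = C[t^2] (+) t C[t^2] is modelled as pairs (f,g) of
complex polynomials in x = t^2, the pair (f,g) standing for f(t^2) + t g(t^2);
f is the even component, g the odd one.\<close>

type_synonym omega_vec = "complex poly \<times> complex poly"

definition shiftp :: "complex \<Rightarrow> complex poly \<Rightarrow> complex poly" where
  "shiftp c f = pcompose f [:- c, 1:]"

definition kd :: "'a \<Rightarrow> 'a \<Rightarrow> complex" where
  "kd x y = (if x = y then 1 else 0)"

definition omegaL :: "complex \<Rightarrow> complex \<Rightarrow> complex \<Rightarrow> complex \<Rightarrow> int \<Rightarrow> nat
                      \<Rightarrow> omega_vec \<Rightarrow> omega_vec" where
  "omegaL q lam a b m i v =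
     (smult (lam powi m) ([: kd i 0 * (- of_int m * q * a) + kd q (-1) * kd i 1 * b, kd i 0 :]
                            * shiftp (of_int m * q) (fst v)),
      smult (lam powi m) ([: kd i 0 * (- of_int m * q * a - of_int m * q / 2)
                              + kd q (-1) * kd i 1 * b, kd i 0 :]
                            * shiftp (of_int m * q) (snd v)))"

definition omegaG :: "complex \<Rightarrow> complex \<Rightarrow> complex \<Rightarrow> complex \<Rightarrow> int \<Rightarrow> nat
                      \<Rightarrow> omega_vec \<Rightarrow> omega_vec" where
  "omegaG q lam a b m i v =
     (smult (q * lam powi m) ([: kd i 0 * (- 2 * of_int m * q * a) + 2 * kd q (-1) * kd i 1 * b,
                                 kd i 0 :] * shiftp (of_int m * q) (snd v)),
      smult (lam powi m * kd i 0) (shiftp (of_int m * q) (fst v)))"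

text \<open>Sub-supermodules: Z2-graded complex subspaces stable under a family of operators.\<close>
definition graded_subspace :: "omega_vec set \<Rightarrow> bool" where
  "graded_subspace W \<longleftrightarrow> (0, 0) \<in> W
     \<and> (\<forall>v\<in>W. \<forall>w\<in>W. (fst v + fst w, snd v + snd w) \<in> W)
     \<and> (\<forall>c. \<forall>v\<in>W. (smult c (fst v), smult c (snd v)) \<in> W)
     \<and> (\<forall>v\<in>W. (fst v, 0) \<in> W \<and> (0, snd v) \<in> W)"

definition simple_for :: "(omega_vec \<Rightarrow> omega_vec) set \<Rightarrow> bool" where
  "simple_for Ops \<longleftrightarrow> (\<forall>W. graded_subspace W \<and> (\<forall>T\<in>Ops. T ` W \<subseteq> W)
                         \<longrightarrow> W = {(0, 0)} \<or> W = UNIV)"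

definition R_ops :: "complex \<Rightarrow> complex \<Rightarrow> complex \<Rightarrow> complex \<Rightarrow> (omega_vec \<Rightarrow> omega_vec) set" where
  "R_ops q lam a b = {omegaL q lam a b m i | m i. True} \<union> {omegaG q lam a b m i | m i. True}"

definition scale_vec :: "complex \<Rightarrow> omega_vec \<Rightarrow> omega_vec" where
  "scale_vec c v = (smult c (fst v), smult c (snd v))"

text \<open>Operators of the basis of the Neveu-Schwarz-Block algebra L acting via tau:
  L_{m,i} acts as (1/2) L_{2m,i}, and G_{r,j} (r = k + 1/2) acts as (1/sqrt 2) G_{2r,j} = G_{2k+1,j}.\<close>
definition L_ops :: "complex \<Rightarrow> complex \<Rightarrow> complex \<Rightarrow> complex \<Rightarrow> (omega_vec \<Rightarrow> omega_vec) set" where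
  "L_ops q lam a b =
     {scale_vec (1/2) \<circ> omegaL q lam a b (2 * m) i | m i. True}
     \<union> {scale_vec (1 / complex_of_real (sqrt 2)) \<circ> omegaG q lam a b (2 * k + 1) j | k j. True}"

end

theory Submission
  imports Defs "HOL-Library.Product_Plus"
begin

(* For fixed v and i, the vectors lam^-m L_{m,i} v and lam^-m G_{m,i} v depend polynomially
   on m, coefficientwise and with degree bounded independently of the coefficient, because the
   shift f(x) |-> f(x - m q) does. By Lagrange interpolation such a family lies in the span of
   its values at any N + 1 integers, so a subspace containing it for infinitely many m contains
   it for all m. Through tau, L acts by nonzero multiples of the L_{2m,i} and G_{2k+1,j}; as
   the even and the odd integers are infinite sets, the L-submodules and the R-submodules of
   Omega_R(lam,a,b) are the same. *)

definition lagrange_basis :: "'a::field set \<Rightarrow> 'a \<Rightarrow> 'a \<Rightarrow> 'a" where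
  "lagrange_basis S s z = (\<Prod>t\<in>S - {s}. (z - t) / (s - t))"

lemma poly_lagrange_interpolation:
  fixes p :: "'a::field poly"
  assumes S: "finite S" and deg: "degree p < card S"
  shows "poly p z = (\<Sum>s\<in>S. lagrange_basis S s z * poly p s)"
proof -
  define basis where "basis s = (\<Prod>t\<in>S - {s}. smult (1 / (s - t)) [:- t, 1:])" for s
  define L where "L = (\<Sum>s\<in>S. smult (poly p s) (basis s))"
  have poly_L: "poly L z = (\<Sum>s\<in>S. lagrange_basis S s z * poly p s)" for z
    unfolding L_def basis_def lagrange_basis_def
    by (simp add: poly_sum poly_prod mult.commute diff_divide_distrib)
  have deg_basis: "degree (basis s) \<le> card S - 1" if "s \<in> S" for s
  proof -
    have "degree (basis s) \<le> sum (degree \<circ> (\<lambda>t. smult (1 / (s - t)) [:- t, 1:])) (S - {s})"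
      unfolding basis_def using S by (intro degree_prod_sum_le) simp
    also have "\<dots> \<le> (\<Sum>t\<in>S - {s}. 1)"
      by (intro sum_mono) (simp add: degree_smult_le)
    finally show ?thesis using S that by simp
  qed
  have deg_L: "degree L \<le> card S - 1"
    unfolding L_def using deg_basis
    by (intro degree_sum_le[OF S]) (rule order.trans[OF degree_smult_le], simp)
  have poly_L_eq: "poly L x = poly p x" if "x \<in> S" for x
  proof -
    have "lagrange_basis S s x = 0" if "s \<in> S - {x}" for s
      unfolding lagrange_basis_def using S that \<open>x \<in> S\<close> by (auto intro!: prod_zero)
    moreover have "lagrange_basis S x x = 1"
      unfolding lagrange_basis_def by (rule prod.neutral) auto
    ultimately show ?thesis
      using S that by (simp add: poly_L sum.remove[of S x])
  qed
  have "degree L < card S"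
    using deg_L deg by linarith
  then have "L = p"
    using poly_eqI_degree[of S L p] poly_L_eq deg by blast
  with poly_L[of z] show ?thesis by (simp only:)
qed

definition polynomial_family :: "nat \<Rightarrow> (int \<Rightarrow> 'a::comm_ring_1 poly) \<Rightarrow> bool" where
  "polynomial_family N F \<longleftrightarrow>
     (\<forall>j. \<exists>p. degree p \<le> N \<and> (\<forall>m. coeff (F m) j = poly p (of_int m)))"

lemma polynomial_family_mono:
  "polynomial_family N F \<Longrightarrow> N \<le> M \<Longrightarrow> polynomial_family M F"
  unfolding polynomial_family_def by (meson order.trans)

lemma polynomial_family_const: "polynomial_family 0 (\<lambda>m. f)"
  unfolding polynomial_family_def
proof
  fix j
  show "\<exists>p. degree p \<le> 0 \<and> (\<forall>m. coeff f j = poly p (of_int m))"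
    by (rule exI[of _ "[:coeff f j:]"]) simp
qed

lemma polynomial_family_linear: "polynomial_family 1 (\<lambda>m. [:\<alpha> + \<beta> * of_int m, d:])"
  unfolding polynomial_family_def
proof
  fix j
  show "\<exists>p. degree p \<le> 1 \<and> (\<forall>m. coeff [:\<alpha> + \<beta> * of_int m, d:] j = poly p (of_int m))"
    by (rule exI[of _ "[:coeff [:\<alpha>, d:] j, if j = 0 then \<beta> else 0:]"])
      (cases j, auto simp: algebra_simps)
qed

lemma polynomial_family_add:
  assumes "polynomial_family N F" and "polynomial_family N G"
  shows "polynomial_family N (\<lambda>m. F m + G m)"
  unfolding polynomial_family_def
proof
  fix j
  obtain p q where "degree p \<le> N" "\<And>m. coeff (F m) j = poly p (of_int m)"
    and "degree q \<le> N" "\<And>m. coeff (G m) j = poly q (of_int m)"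
    using assms unfolding polynomial_family_def by meson
  then show "\<exists>r. degree r \<le> N \<and> (\<forall>m. coeff (F m + G m) j = poly r (of_int m))"
    by (intro exI[of _ "p + q"]) (auto intro: degree_add_le)
qed

lemma polynomial_family_smult:
  assumes "polynomial_family N F"
  shows "polynomial_family N (\<lambda>m. smult c (F m))"
  unfolding polynomial_family_def
proof
  fix j
  obtain p where "degree p \<le> N" "\<And>m. coeff (F m) j = poly p (of_int m)"
    using assms unfolding polynomial_family_def by meson
  then show "\<exists>r. degree r \<le> N \<and> (\<forall>m. coeff (smult c (F m)) j = poly r (of_int m))"
    by (intro exI[of _ "smult c p"]) (auto intro: order.trans[OF degree_smult_le])
qed

lemma polynomial_family_mult:
  assumes "polynomial_family N F" and "polynomial_family M G"
  shows "polynomial_family (N + M) (\<lambda>m. F m * G m)"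
  unfolding polynomial_family_def
proof
  fix j
  obtain P Q where P: "\<And>i. degree (P i) \<le> N" "\<And>i m. coeff (F m) i = poly (P i) (of_int m)"
    and Q: "\<And>i. degree (Q i) \<le> M" "\<And>i m. coeff (G m) i = poly (Q i) (of_int m)"
    using assms unfolding polynomial_family_def by metis
  have "degree (\<Sum>i\<le>j. P i * Q (j - i)) \<le> N + M"
    by (intro degree_sum_le order.trans[OF degree_mult_le] add_mono P(1) Q(1)) auto
  moreover have "coeff (F m * G m) j = poly (\<Sum>i\<le>j. P i * Q (j - i)) (of_int m)" for m
    by (simp add: coeff_mult poly_sum P(2) Q(2))
  ultimately show "\<exists>r. degree r \<le> N + M \<and> (\<forall>m. coeff (F m * G m) j = poly r (of_int m))"
    by blast
qed

lemma polynomial_family_pcompose: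
  assumes "polynomial_family N G"
  shows "polynomial_family (degree f * N) (\<lambda>m. pcompose f (G m))"
proof (induction f rule: pCons_induct)
  case 0
  show ?case using polynomial_family_const[of 0] by simp
next
  case (pCons a f)
  show ?case
  proof (cases "f = 0")
    case True
    then show ?thesis using polynomial_family_const[of "[:a:]"] by simp
  next
    case False
    have "polynomial_family (N + degree f * N) (\<lambda>m. [:a:] + G m * pcompose f (G m))"
      using polynomial_family_add[OF polynomial_family_mono[OF polynomial_family_const]
          polynomial_family_mult[OF assms pCons.IH]] by simp
    with False show ?thesis by (simp add: pcompose_pCons)
  qed
qed

lemma polynomial_family_shiftp:
  "polynomial_family (degree f) (\<lambda>m. shiftp (of_int m * c) f)"
  using polynomial_family_pcompose[OF polynomial_family_linear[of 0 "- c" 1], of f]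
  by (simp add: shiftp_def mult.commute)

lemma polynomial_family_interpolation:
  fixes F :: "int \<Rightarrow> 'a::field_char_0 poly"
  assumes F: "polynomial_family N F" and B: "finite B" "card B = Suc N"
  shows "F m = (\<Sum>s\<in>B. smult (lagrange_basis (of_int ` B) (of_int s) (of_int m)) (F s))"
proof (rule poly_eqI)
  fix j
  obtain p where p: "degree p \<le> N" "\<And>m. coeff (F m) j = poly p (of_int m)"
    using F unfolding polynomial_family_def by blast
  have inj: "inj_on (of_int :: int \<Rightarrow> 'a) B"
    by (simp add: inj_on_def)
  have "coeff (F m) j = (\<Sum>s\<in>of_int ` B. lagrange_basis (of_int ` B) s (of_int m) * poly p s)"
    unfolding p(2) using B p(1) card_image[OF inj]
    by (intro poly_lagrange_interpolation) auto
  then show "coeff (F m) j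
      = coeff (\<Sum>s\<in>B. smult (lagrange_basis (of_int ` B) (of_int s) (of_int m)) (F s)) j"
    by (simp add: sum.reindex[OF inj] coeff_sum p(2))
qed

lemma graded_subspace_scale:
  "graded_subspace W \<Longrightarrow> v \<in> W \<Longrightarrow> scale_vec c v \<in> W"
  unfolding graded_subspace_def scale_vec_def by blast

lemma graded_subspace_scale_iff:
  assumes "graded_subspace W" and "c \<noteq> 0"
  shows "scale_vec c v \<in> W \<longleftrightarrow> v \<in> W"
  using graded_subspace_scale[OF assms(1), of "scale_vec c v" "inverse c"]
    graded_subspace_scale[OF assms(1), of v c] assms(2)
  by (auto simp: scale_vec_def)

lemma graded_subspace_sum:
  assumes "graded_subspace W" and "finite B" and "\<And>s. s \<in> B \<Longrightarrow> u s \<in> W"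
  shows "(\<Sum>s\<in>B. u s) \<in> W"
  using assms(2,3)
proof (induction B rule: finite_induct)
  case empty
  then show ?case using assms(1) by (simp add: graded_subspace_def zero_prod_def)
next
  case (insert x B)
  then have "u x \<in> W" "(\<Sum>s\<in>B. u s) \<in> W" by auto
  with insert(1,2) assms(1) show ?case
    unfolding graded_subspace_def by (simp add: plus_prod_def)
qed

lemma polynomial_family_in_graded_subspace:
  assumes W: "graded_subspace W"
    and P: "polynomial_family N (\<lambda>m. fst (P m))" "polynomial_family N (\<lambda>m. snd (P m))"
    and A: "infinite A" "\<And>m. m \<in> A \<Longrightarrow> P m \<in> W"
  shows "P m \<in> W"
proof -
  obtain B where B: "finite B" "card B = Suc N" "B \<subseteq> A"
    using infinite_arbitrarily_large[OF A(1)] by blast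
  have "P m = (\<Sum>s\<in>B. scale_vec (lagrange_basis (of_int ` B) (of_int s) (of_int m)) (P s))"
    using polynomial_family_interpolation[OF P(1) B(1,2), of m]
      polynomial_family_interpolation[OF P(2) B(1,2), of m]
    by (simp add: prod_eq_iff scale_vec_def fst_sum snd_sum)
  also have "\<dots> \<in> W"
    using B A(2) by (intro graded_subspace_sum[OF W B(1)] graded_subspace_scale[OF W]) auto
  finally show ?thesis .
qed

lemma twisted_polynomial_family_in_graded_subspace:
  assumes W: "graded_subspace W" and "lam \<noteq> 0"
    and P: "polynomial_family N (\<lambda>m. fst (P m))" "polynomial_family N (\<lambda>m. snd (P m))"
    and A: "infinite A" "\<And>m. m \<in> A \<Longrightarrow> scale_vec (lam powi m) (P m) \<in> W"
  shows "scale_vec (lam powi m) (P m) \<in> W"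
proof -
  have "P m \<in> W"
  proof (rule polynomial_family_in_graded_subspace[OF W P A(1)])
    fix m assume "m \<in> A"
    with A(2) show "P m \<in> W"
      using graded_subspace_scale_iff[OF W] \<open>lam \<noteq> 0\<close> by simp
  qed
  then show ?thesis using graded_subspace_scale[OF W] by blast
qed

lemma polynomial_family_linear_shiftp:
  "polynomial_family (Suc (degree f)) (\<lambda>m. [:\<alpha> + \<beta> * of_int m, d:] * shiftp (of_int m * c) f)"
  using polynomial_family_mult[OF polynomial_family_linear polynomial_family_shiftp] by simp

lemma omegaL_eq_scale: "omegaL q lam a b m i v = scale_vec (lam powi m) (omegaL q 1 a b m i v)"
  by (simp add: omegaL_def scale_vec_def)

lemma omegaG_eq_scale: "omegaG q lam a b m i v = scale_vec (lam powi m) (omegaG q 1 a b m i v)"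
  by (simp add: omegaG_def scale_vec_def mult.commute)

lemma polynomial_family_omegaL:
  fixes v :: omega_vec
  defines "N \<equiv> Suc (max (degree (fst v)) (degree (snd v)))"
  shows "polynomial_family N (\<lambda>m. fst (omegaL q 1 a b m i v))"
    and "polynomial_family N (\<lambda>m. snd (omegaL q 1 a b m i v))"
proof -
  let ?\<alpha> = "kd q (-1) * kd i 1 * b"
  have fst_eq: "(\<lambda>m. fst (omegaL q 1 a b m i v))
      = (\<lambda>m. [:?\<alpha> + (- kd i 0 * q * a) * of_int m, kd i 0:] * shiftp (of_int m * q) (fst v))"
    by (simp add: fun_eq_iff omegaL_def algebra_simps)
  show "polynomial_family N (\<lambda>m. fst (omegaL q 1 a b m i v))"
    unfolding fst_eq N_def by (rule polynomial_family_mono[OF polynomial_family_linear_shiftp]) simp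
  have snd_eq: "(\<lambda>m. snd (omegaL q 1 a b m i v))
      = (\<lambda>m. [:?\<alpha> + (- kd i 0 * (q * a + q / 2)) * of_int m, kd i 0:]
          * shiftp (of_int m * q) (snd v))"
    by (simp add: fun_eq_iff omegaL_def algebra_simps)
  show "polynomial_family N (\<lambda>m. snd (omegaL q 1 a b m i v))"
    unfolding snd_eq N_def by (rule polynomial_family_mono[OF polynomial_family_linear_shiftp]) simp
qed

lemma polynomial_family_omegaG:
  fixes v :: omega_vec
  defines "N \<equiv> Suc (max (degree (fst v)) (degree (snd v)))"
  shows "polynomial_family N (\<lambda>m. fst (omegaG q 1 a b m i v))"
    and "polynomial_family N (\<lambda>m. snd (omegaG q 1 a b m i v))"
proof -
  have fst_eq: "(\<lambda>m. fst (omegaG q 1 a b m i v)) = (\<lambda>m. smult q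
      ([:2 * kd q (-1) * kd i 1 * b + (- 2 * kd i 0 * q * a) * of_int m, kd i 0:]
        * shiftp (of_int m * q) (snd v)))"
    by (simp add: fun_eq_iff omegaG_def algebra_simps)
  show "polynomial_family N (\<lambda>m. fst (omegaG q 1 a b m i v))"
    unfolding fst_eq N_def
    by (rule polynomial_family_mono[OF polynomial_family_smult[OF polynomial_family_linear_shiftp]])
      simp
  have snd_eq: "(\<lambda>m. snd (omegaG q 1 a b m i v)) = (\<lambda>m. smult (kd i 0) (shiftp (of_int m * q) (fst v)))"
    by (simp add: fun_eq_iff omegaG_def)
  show "polynomial_family N (\<lambda>m. snd (omegaG q 1 a b m i v))"
    unfolding snd_eq N_def
    by (rule polynomial_family_mono[OF polynomial_family_smult[OF polynomial_family_shiftp]]) simp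
qed

lemma simple_for_cong:
  assumes "\<And>W. graded_subspace W \<Longrightarrow> (\<forall>T\<in>A. T ` W \<subseteq> W) \<longleftrightarrow> (\<forall>T\<in>B. T ` W \<subseteq> W)"
  shows "simple_for A \<longleftrightarrow> simple_for B"
  using assms unfolding simple_for_def by blast

lemma L_ops_stable_if_R_ops_stable:
  assumes W: "graded_subspace W" and R: "\<forall>T\<in>R_ops q lam a b. T ` W \<subseteq> W"
  shows "\<forall>T\<in>L_ops q lam a b. T ` W \<subseteq> W"
proof -
  have "omegaL q lam a b m i v \<in> W" "omegaG q lam a b m i v \<in> W" if "v \<in> W" for m i v
    using R that unfolding R_ops_def by blast+
  then show ?thesis
    unfolding L_ops_def by (force intro: graded_subspace_scale[OF W])
qed

lemma R_ops_stable_if_L_ops_stable: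
  assumes "lam \<noteq> 0" and W: "graded_subspace W" and L: "\<forall>T\<in>L_ops q lam a b. T ` W \<subseteq> W"
  shows "\<forall>T\<in>R_ops q lam a b. T ` W \<subseteq> W"
proof -
  have evens: "infinite (range (\<lambda>k::int. 2 * k))"
    and odds: "infinite (range (\<lambda>k::int. 2 * k + 1))"
    by (auto dest!: finite_imageD simp: inj_on_def)
  have sampled: "omegaL q lam a b (2 * k) i v \<in> W" "omegaG q lam a b (2 * k + 1) i v \<in> W"
    if "v \<in> W" for k i v
  proof -
    have "scale_vec (1 / 2) \<circ> omegaL q lam a b (2 * k) i \<in> L_ops q lam a b"
      "scale_vec (1 / complex_of_real (sqrt 2)) \<circ> omegaG q lam a b (2 * k + 1) i \<in> L_ops q lam a b"
      unfolding L_ops_def by blast+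
    then have "scale_vec (1 / 2) (omegaL q lam a b (2 * k) i v) \<in> W"
      "scale_vec (1 / complex_of_real (sqrt 2)) (omegaG q lam a b (2 * k + 1) i v) \<in> W"
      using L that by (metis comp_apply image_subset_iff)+
    then show "omegaL q lam a b (2 * k) i v \<in> W" "omegaG q lam a b (2 * k + 1) i v \<in> W"
      using graded_subspace_scale_iff[OF W] by simp_all
  qed
  have "omegaL q lam a b m i v \<in> W" if "v \<in> W" for m i v
    unfolding omegaL_eq_scale[of q lam]
  proof (rule twisted_polynomial_family_in_graded_subspace
      [OF W \<open>lam \<noteq> 0\<close> polynomial_family_omegaL evens])
    fix m assume "m \<in> range (\<lambda>k::int. 2 * k)"
    with sampled(1)[OF that] show "scale_vec (lam powi m) (omegaL q 1 a b m i v) \<in> W"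
      by (auto simp flip: omegaL_eq_scale)
  qed
  moreover have "omegaG q lam a b m i v \<in> W" if "v \<in> W" for m i v
    unfolding omegaG_eq_scale[of q lam]
  proof (rule twisted_polynomial_family_in_graded_subspace
      [OF W \<open>lam \<noteq> 0\<close> polynomial_family_omegaG odds])
    fix m assume "m \<in> range (\<lambda>k::int. 2 * k + 1)"
    with sampled(2)[OF that] show "scale_vec (lam powi m) (omegaG q 1 a b m i v) \<in> W"
      by (auto simp flip: omegaG_eq_scale)
  qed
  ultimately show ?thesis
    unfolding R_ops_def by blast
qed

theorem proposition4p2:
  fixes q lam a b :: complex
  assumes "q \<noteq> 0" and "lam \<noteq> 0"
  shows "simple_for (L_ops q lam a b) \<longleftrightarrow> simple_for (R_ops q lam a b)"
proof (rule simple_for_cong)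
  fix W assume W: "graded_subspace W"
  show "(\<forall>T\<in>L_ops q lam a b. T ` W \<subseteq> W) \<longleftrightarrow> (\<forall>T\<in>R_ops q lam a b. T ` W \<subseteq> W)"
    using R_ops_stable_if_L_ops_stable[OF \<open>lam \<noteq> 0\<close> W] L_ops_stable_if_R_ops_stable[OF W]
    by (rule iffI)
qed

end
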